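(* In the setting of the context, let $$SA(M)=-\frac12\sum_{i=1}^{2n}[M_i,M_{i+1}],\qquad SA(N)=-\frac12\sum_{i=1}^{2n}[N_{i-\frac12},N_{i+\frac12}]$$ be the signed areas of $M$ and $N$. Then $$SA(M)-SA(N)=\sum_{i=1}^{n}\beta_i^2\,[V_{i-\frac12},V_{i+\frac12}].$$
   Context: $[x,y]$ denotes the determinant of the matrix with columns $x,y\in\mathbb{R}^2$. Fix $n\ge2$; indices (integer and half-integer) are read modulo $2n$. $U$ is a convex $2n$-gon with distinct vertices $U_1,\dots,U_{2n}$ in counterclockwise order with $U_{i+n}=-U_i$, and $V_{i+\frac12}=(U_{i+1}-U_i)/[U_i,U_{i+1}]$. Let $c>0$ and let $P$ be a convex polygon with nonempty interior and vertex list $P_1,\dots,P_{2n}$ (consecutive entries may coincide) with $P_{i+1}-P_i$ a nonnegative multiple of $V_{i+\frac12}$ and $P_i-P_{i+n}=2cU_i$ for all $i$. The central equidistant $M$ has vertices $M_i=\frac12(P_i+P_{i+n})$; define $\alpha_{i+\frac12}$ by $M_{i+1}-M_i=\alpha_{i+\frac12}(U_{i+1}-U_i)$ and $\beta_i=\frac12\sum_{j=i}^{i+n-1}\alpha_{j+\frac12}[U_j,U_{j+1}]$. The involute $N$ of $M$ is the polygon with vertices $N_{i+\frac12}=M_i+\beta_iV_{i+\frac12}$, $1\le i\le 2n$. *)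

theory Defs
  imports "HOL-Analysis.Analysis"
begin

text \<open>Points of the plane are pairs of reals. Integer index i stands for vertex i,
  and for half-integer vertices we use: index i stands for i + 1/2.\<close>

definition det2 :: "real \<times> real \<Rightarrow> real \<times> real \<Rightarrow> real" where
  "det2 x y = fst x * snd y - snd x * fst y"

definition convex_ccw_polygon :: "nat \<Rightarrow> (int \<Rightarrow> real \<times> real) \<Rightarrow> bool" where
  "convex_ccw_polygon m p \<longleftrightarrow>
     (\<forall>i. p (i + int m) = p i) \<and> inj_on p {1..int m} \<and>
     (\<forall>i j. j mod int m \<noteq> i mod int m \<longrightarrow> j mod int m \<noteq> (i + 1) mod int m \<longrightarrow>
        det2 (p (i + 1) - p i) (p j - p i) > 0)"

text \<open>V U i represents V_{i+1/2}.\<close>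
definition Vdir :: "(int \<Rightarrow> real \<times> real) \<Rightarrow> int \<Rightarrow> real \<times> real" where
  "Vdir U i = (1 / det2 (U i) (U (i + 1))) *\<^sub>R (U (i + 1) - U i)"

definition Mvert :: "nat \<Rightarrow> (int \<Rightarrow> real \<times> real) \<Rightarrow> int \<Rightarrow> real \<times> real" where
  "Mvert n P i = (1 / 2) *\<^sub>R (P i + P (i + int n))"

text \<open>alpha i represents alpha_{i+1/2}.\<close>
definition beta :: "nat \<Rightarrow> (int \<Rightarrow> real \<times> real) \<Rightarrow> (int \<Rightarrow> real) \<Rightarrow> int \<Rightarrow> real" where
  "beta n U alpha i = (1 / 2) * (\<Sum>j\<in>{i..i + int n - 1}. alpha j * det2 (U j) (U (j + 1)))"

text \<open>Involute vertices: Nvert n U P alpha i represents N_{i+1/2}.\<close>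
definition Nvert :: "nat \<Rightarrow> (int \<Rightarrow> real \<times> real) \<Rightarrow> (int \<Rightarrow> real \<times> real) \<Rightarrow> (int \<Rightarrow> real) \<Rightarrow> int \<Rightarrow> real \<times> real" where
  "Nvert n U P alpha i = Mvert n P i + beta n U alpha i *\<^sub>R Vdir U i"

end

theory Submission
  imports Defs
begin

text \<open>Central symmetry makes \<open>\<alpha>\<close> antiperiodic with period n, so the window sums
  defining \<open>\<beta>\<close> satisfy \<open>\<beta>_i - \<beta>_(i+1) = \<alpha>_(i+1/2) [U_i, U_(i+1)]\<close>, i.e.
  \<open>M_(i+1) = M_i + (\<beta>_i - \<beta>_(i+1)) V_(i+1/2)\<close>. For any closed polygon m built from
  directions b and weights B in this way, the involute vertices next to \<open>m_i\<close> are
  \<open>m_i + B_i b_(i-1)\<close> and \<open>m_i + B_i b_i\<close>, so the two area terms at i differ by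
  \<open>-B_i\<^sup>2 [b_(i-1), b_i]\<close> plus a telescoping term. Summing over a period gives the
  defect, and since \<open>\<beta>\<close> and V are both antiperiodic the summand has period n.\<close>

lemma sum_int_shift: "(\<Sum>j\<in>{a + k..b + k}. f j) = (\<Sum>j\<in>{a..b::int}. f (j + k))"
  by (rule sum.reindex_bij_witness[where i="\<lambda>j. j + k" and j="\<lambda>j. j - k"]) auto

lemma sum_telescope_int: "(\<Sum>i\<in>{1..int k}. g (i - 1) - g i) = g 0 - (g (int k) :: 'a::ab_group_add)"
proof (induction k)
  case (Suc k)
  have "{1..int (Suc k)} = insert (1 + int k) {1..int k}" by auto
  then show ?case using Suc by simp
qed simp

lemma sum_periodic_double_period:
  assumes "\<And>i. h (i + int n) = (h i :: 'a::comm_monoid_add)"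
  shows "(\<Sum>i\<in>{1..2 * int n}. h i) = (\<Sum>i\<in>{1..int n}. h i) + (\<Sum>i\<in>{1..int n}. h i)"
proof -
  have "{1..2 * int n} = {1..int n} \<union> {1 + int n..int n + int n}"
    and "{1..int n} \<inter> {1 + int n..int n + int n} = {}" by auto
  then have "(\<Sum>i\<in>{1..2 * int n}. h i)
      = (\<Sum>i\<in>{1..int n}. h i) + (\<Sum>i\<in>{1 + int n..int n + int n}. h i)"
    by (simp add: sum.union_disjoint)
  then show ?thesis
    using sum_int_shift[where a=1 and k="int n" and b="int n" and f=h] assms by simp
qed

lemma sum_window_succ:
  assumes "n \<ge> 1"
  shows "(\<Sum>j\<in>{i + 1..i + 1 + int n - 1}. f j) = (\<Sum>j\<in>{i..i + int n - 1}. f j) - f i + (f (i + int n) :: 'a::ab_group_add)"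
proof -
  have "{i..i + int n - 1} = insert i {i + 1..i + int n - 1}"
    and "{i + 1..i + 1 + int n - 1} = insert (i + int n) {i + 1..i + int n - 1}"
    using assms by auto
  then show ?thesis by simp
qed

lemma sum_window_antiperiodic:
  assumes "\<And>j. f (j + int n) = - (f j :: 'a::ab_group_add)"
  shows "(\<Sum>j\<in>{i + int n..i + int n + int n - 1}. f j) = - (\<Sum>j\<in>{i..i + int n - 1}. f j)"
proof -
  have "(\<Sum>j\<in>{i + int n..i + int n + int n - 1}. f j) = (\<Sum>j\<in>{i..i + int n - 1}. f (j + int n))"
    using sum_int_shift[where f=f and a=i and b="i + int n - 1" and k="int n"]
    by (simp add: algebra_simps)
  then show ?thesis by (simp add: assms sum_negf)
qed

lemma mod_add_neq:
  assumes "0 < k" "k < (m::int)"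
  shows "(i + k) mod m \<noteq> i mod m"
proof
  assume "(i + k) mod m = i mod m"
  then have "m dvd k" by (simp add: mod_eq_dvd_iff)
  then show False using assms zdvd_imp_le by fastforce
qed

lemma det2_self [simp]: "det2 x x = 0"
  by (simp add: det2_def)

lemma involute_area_term:
  fixes m b :: "int \<Rightarrow> real \<times> real" and B :: "int \<Rightarrow> real"
  assumes step: "\<And>i. m (i + 1) = m i + (B i - B (i + 1)) *\<^sub>R b i"
  shows "det2 (m i) (m (i + 1)) - det2 (m (i - 1) + B (i - 1) *\<^sub>R b (i - 1)) (m i + B i *\<^sub>R b i)
    = B i * det2 (m (i - 1)) (b (i - 1)) - B (i + 1) * det2 (m i) (b i) - (B i)\<^sup>2 * det2 (b (i - 1)) (b i)"
proof -
  have prev: "m i = m (i - 1) + (B (i - 1) - B i) *\<^sub>R b (i - 1)"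
    using step[of "i - 1"] by simp
  show ?thesis
    unfolding step[of i] prev
    by (simp add: det2_def algebra_simps power2_eq_square)
qed

lemma involute_area_defect:
  fixes m b :: "int \<Rightarrow> real \<times> real" and B :: "int \<Rightarrow> real"
  assumes step: "\<And>i. m (i + 1) = m i + (B i - B (i + 1)) *\<^sub>R b i"
    and m_per: "\<And>i. m (i + int p) = m i"
    and b_per: "\<And>i. b (i + int p) = b i"
    and B_per: "\<And>i. B (i + int p) = B i"
  shows "(\<Sum>i\<in>{1..int p}. det2 (m i) (m (i + 1)))
      - (\<Sum>i\<in>{1..int p}. det2 (m (i - 1) + B (i - 1) *\<^sub>R b (i - 1)) (m i + B i *\<^sub>R b i))
    = - (\<Sum>i\<in>{1..int p}. (B i)\<^sup>2 * det2 (b (i - 1)) (b i))"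
proof -
  define g where "g i = B (i + 1) * det2 (m i) (b i)" for i
  have "(\<Sum>i\<in>{1..int p}. det2 (m i) (m (i + 1)))
      - (\<Sum>i\<in>{1..int p}. det2 (m (i - 1) + B (i - 1) *\<^sub>R b (i - 1)) (m i + B i *\<^sub>R b i))
    = (\<Sum>i\<in>{1..int p}. g (i - 1) - g i) - (\<Sum>i\<in>{1..int p}. (B i)\<^sup>2 * det2 (b (i - 1)) (b i))"
    by (simp add: involute_area_term[where m=m and B=B and b=b, OF step] g_def sum_subtractf[symmetric])
  also have "(\<Sum>i\<in>{1..int p}. g (i - 1) - g i) = 0"
    unfolding sum_telescope_int using m_per[of 0] b_per[of 0] B_per[of 1] by (simp add: g_def add.commute)
  finally show ?thesis by simp
qed

lemma symmetric_convex_polygon_det2_pos: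
  assumes "n \<ge> 2" "convex_ccw_polygon (2 * n) U" "\<And>i. U (i + int n) = - U i"
  shows "det2 (U i) (U (i + 1)) > 0"
proof -
  have "(i + int n) mod int (2 * n) \<noteq> i mod int (2 * n)"
    using mod_add_neq[of "int n" "int (2 * n)" i] assms(1) by simp
  moreover have "(i + int n) mod int (2 * n) \<noteq> (i + 1) mod int (2 * n)"
    using mod_add_neq[of "int n - 1" "int (2 * n)" "i + 1"] assms(1) by (simp add: ac_simps)
  ultimately have "det2 (U (i + 1) - U i) (U (i + int n) - U i) > 0"
    using assms(2) unfolding convex_ccw_polygon_def by blast
  then show ?thesis using assms(3)[of i] by (simp add: det2_def algebra_simps)
qed

lemma Vdir_antiperiodic:
  assumes "\<And>i. U (i + int n) = - U i"
  shows "Vdir U (i + int n) = - Vdir U i"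
  using assms[of i] assms[of "i + 1"] by (simp add: Vdir_def det2_def algebra_simps)

lemma Mvert_periodic:
  assumes "\<And>i. P (i + 2 * int n) = P i"
  shows "Mvert n P (i + int n) = Mvert n P i"
  using assms[of i] by (simp add: Mvert_def ac_simps mult_2)

lemma alpha_antiperiodic:
  assumes U_anti: "\<And>i. U (i + int n) = - U i"
    and P_per: "\<And>i. P (i + 2 * int n) = P i"
    and U_edge: "U (i + 1) \<noteq> U i"
    and alpha: "\<And>i. Mvert n P (i + 1) - Mvert n P i = alpha i *\<^sub>R (U (i + 1) - U i)"
  shows "alpha (i + int n) = - alpha i"
proof -
  have "alpha (i + int n) *\<^sub>R (U (i + int n + 1) - U (i + int n)) = alpha i *\<^sub>R (U (i + 1) - U i)"
    using alpha[of i] alpha[of "i + int n"] Mvert_periodic[where P=P, OF P_per, of i]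
      Mvert_periodic[where P=P, OF P_per, of "i + 1"] by (simp add: ac_simps)
  then have "(alpha (i + int n) + alpha i) *\<^sub>R (U (i + 1) - U i) = 0"
    using U_anti[of i] U_anti[of "i + 1"] by (simp add: algebra_simps)
  then show ?thesis using U_edge by simp
qed

lemma beta_succ:
  assumes "n \<ge> 1" "\<And>i. U (i + int n) = - U i" "\<And>i. alpha (i + int n) = - alpha i"
  shows "beta n U alpha (i + 1) = beta n U alpha i - alpha i * det2 (U i) (U (i + 1))"
proof -
  have "U (i + int n + 1) = - U (i + 1)" using assms(2)[of "i + 1"] by (simp add: ac_simps)
  then show ?thesis
    using assms(2)[of i] assms(3)[of i]
    unfolding beta_def sum_window_succ[OF assms(1)] by (simp add: det2_def ring_distribs)
qed

lemma beta_antiperiodic: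
  assumes "\<And>i. U (i + int n) = - U i" "\<And>i. alpha (i + int n) = - alpha i"
  shows "beta n U alpha (i + int n) = - beta n U alpha i"
proof -
  let ?f = "\<lambda>j. alpha j * det2 (U j) (U (j + 1))"
  have "?f (j + int n) = - ?f j" for j
    using assms(1)[of j] assms(1)[of "j + 1"] assms(2)[of j] by (simp add: ac_simps det2_def)
  then have "(\<Sum>j\<in>{i + int n..i + int n + int n - 1}. ?f j) = - (\<Sum>j\<in>{i..i + int n - 1}. ?f j)"
    by (rule sum_window_antiperiodic)
  then show ?thesis unfolding beta_def by simp
qed

lemma Mvert_succ:
  assumes "det2 (U i) (U (i + 1)) \<noteq> 0"
    and "Mvert n P (i + 1) - Mvert n P i = alpha i *\<^sub>R (U (i + 1) - U i)"
    and "beta n U alpha (i + 1) = beta n U alpha i - alpha i * det2 (U i) (U (i + 1))"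
  shows "Mvert n P (i + 1) = Mvert n P i + (beta n U alpha i - beta n U alpha (i + 1)) *\<^sub>R Vdir U i"
proof -
  have "Mvert n P (i + 1) = Mvert n P i + (Mvert n P (i + 1) - Mvert n P i)" by simp
  also have "\<dots> = Mvert n P i + (beta n U alpha i - beta n U alpha (i + 1)) *\<^sub>R Vdir U i"
    using assms by (simp add: Vdir_def)
  finally show ?thesis .
qed

lemma periodic_of_antiperiodic:
  assumes "\<And>i. f (i + int n) = - (f i :: 'a::group_add)"
  shows "f (i + int (2 * n)) = f i"
  using assms[of i] assms[of "i + int n"] by (simp add: ac_simps mult_2)

theorem proposition4p2:
  fixes n :: nat and U P :: "int \<Rightarrow> real \<times> real" and c :: real and alpha :: "int \<Rightarrow> real"
  assumes n2: "n \<ge> 2"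
    and Upoly: "convex_ccw_polygon (2 * n) U"
    and Usym: "\<forall>i. U (i + int n) = - U i"
    and c_pos: "c > 0"
    and Pper: "\<forall>i. P (i + 2 * int n) = P i"
    and Pint: "interior (convex hull (P ` {1..2 * int n})) \<noteq> {}"
    and Pedge: "\<forall>i. \<exists>t\<ge>0. P (i + 1) - P i = t *\<^sub>R Vdir U i"
    and Pwidth: "\<forall>i. P i - P (i + int n) = (2 * c) *\<^sub>R U i"
    and alpha: "\<forall>i. Mvert n P (i + 1) - Mvert n P i = alpha i *\<^sub>R (U (i + 1) - U i)"
  shows "(- (1 / 2) * (\<Sum>i\<in>{1..2 * int n}. det2 (Mvert n P i) (Mvert n P (i + 1))))
         - (- (1 / 2) * (\<Sum>i\<in>{1..2 * int n}. det2 (Nvert n U P alpha (i - 1)) (Nvert n U P alpha i)))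
         = (\<Sum>i\<in>{1..int n}. (beta n U alpha i)\<^sup>2 * det2 (Vdir U (i - 1)) (Vdir U i))"
proof -
  have U_anti: "\<And>i. U (i + int n) = - U i" and P_per: "\<And>i. P (i + 2 * int n) = P i"
    using Usym Pper by blast+
  have det_pos: "\<And>i. det2 (U i) (U (i + 1)) > 0"
    using symmetric_convex_polygon_det2_pos[OF n2 Upoly] U_anti by blast
  then have "\<And>i. U (i + 1) \<noteq> U i" by (metis det2_self less_irrefl)
  then have alpha_anti: "\<And>i. alpha (i + int n) = - alpha i"
    using alpha_antiperiodic[where U=U and P=P, OF U_anti P_per] alpha by blast
  note beta_anti = beta_antiperiodic[where U=U and alpha=alpha, OF U_anti alpha_anti]
    and V_anti = Vdir_antiperiodic[where U=U, OF U_anti]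
  have beta_step: "\<And>i. beta n U alpha (i + 1) = beta n U alpha i - alpha i * det2 (U i) (U (i + 1))"
    using beta_succ[where U=U and alpha=alpha, OF _ U_anti alpha_anti] n2 by simp
  have M_step: "Mvert n P (i + 1)
      = Mvert n P i + (beta n U alpha i - beta n U alpha (i + 1)) *\<^sub>R Vdir U i" for i
    using det_pos[of i] alpha beta_step by (intro Mvert_succ) auto
  have "(\<Sum>i\<in>{1..2 * int n}. (beta n U alpha i)\<^sup>2 * det2 (Vdir U (i - 1)) (Vdir U i))
      = 2 * (\<Sum>i\<in>{1..int n}. (beta n U alpha i)\<^sup>2 * det2 (Vdir U (i - 1)) (Vdir U i))"
    using beta_anti V_anti V_anti[of "_ - 1"]
    by (subst sum_periodic_double_period) (simp_all add: det2_def algebra_simps)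
  moreover have "Mvert n P (i + int (2 * n)) = Mvert n P i" for i
    using P_per[of i] P_per[of "i + int n"] by (simp add: Mvert_def algebra_simps)
  ultimately show ?thesis
    using involute_area_defect[where p="2 * n", OF M_step _
        periodic_of_antiperiodic[where f="Vdir U", OF V_anti]
        periodic_of_antiperiodic[where f="beta n U alpha", OF beta_anti]]
    by (simp add: Nvert_def sum_subtractf algebra_simps)
qed

end
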